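(* Let $G$ be a connected graph with at least three vertices and let $m \geq 1$ be an integer. Then $$\omega(G)+1 \leq \chi_\rho(FSSD_m(G)) \leq \chi_\rho(G)+1,$$ where $\omega(G)$ denotes the clique number of $G$.
   Context: All graphs are finite and simple. For a positive integer $i$, an $i$-packing in a graph $G$ is a set of vertices any two distinct members of which are at distance greater than $i$ in $G$. The packing chromatic number $\chi_\rho(G)$ is the smallest integer $k$ such that $V(G)$ can be partitioned into sets $V_1,\dots,V_k$ with each $V_i$ an $i$-packing; equivalently, the least $k$ admitting a map $c:V(G)\to\{1,\dots,k\}$ such that $c(u)=c(v)=i$ with $u\neq v$ implies $d_G(u,v)>i$. For a positive integer $m$, the finite super subdivision graph $FSSD_m(G)$ is obtained from $G$ by replacing each edge $uv$ of $G$ by a copy of $K_{2,m}$, i.e. the edge $uv$ is deleted and $m$ new vertices are added, each adjacent to exactly $u$ and $v$. *)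

theory Defs
  imports Main "HOL-Library.Extended_Nat"
begin

definition simple_graph :: "'a set \<Rightarrow> ('a \<Rightarrow> 'a \<Rightarrow> bool) \<Rightarrow> bool" where
  "simple_graph V E \<longleftrightarrow> finite V \<and>
     (\<forall>u v. E u v \<longrightarrow> u \<in> V \<and> v \<in> V \<and> u \<noteq> v \<and> E v u)"

definition walk :: "'a set \<Rightarrow> ('a \<Rightarrow> 'a \<Rightarrow> bool) \<Rightarrow> 'a list \<Rightarrow> bool" where
  "walk V E xs \<longleftrightarrow> xs \<noteq> [] \<and> set xs \<subseteq> V \<and>
     (\<forall>i. Suc i < length xs \<longrightarrow> E (xs ! i) (xs ! Suc i))"

definition gdist :: "'a set \<Rightarrow> ('a \<Rightarrow> 'a \<Rightarrow> bool) \<Rightarrow> 'a \<Rightarrow> 'a \<Rightarrow> enat" where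
  "gdist V E u v = (INF xs \<in> {xs. walk V E xs \<and> hd xs = u \<and> last xs = v}. enat (length xs - 1))"

definition connected_graph :: "'a set \<Rightarrow> ('a \<Rightarrow> 'a \<Rightarrow> bool) \<Rightarrow> bool" where
  "connected_graph V E \<longleftrightarrow> (\<forall>u\<in>V. \<forall>v\<in>V. gdist V E u v \<noteq> \<infinity>)"

definition i_packing :: "'a set \<Rightarrow> ('a \<Rightarrow> 'a \<Rightarrow> bool) \<Rightarrow> nat \<Rightarrow> 'a set \<Rightarrow> bool" where
  "i_packing V E i S \<longleftrightarrow> S \<subseteq> V \<and>
     (\<forall>u\<in>S. \<forall>v\<in>S. u \<noteq> v \<longrightarrow> gdist V E u v > enat i)"

definition packing_coloring :: "'a set \<Rightarrow> ('a \<Rightarrow> 'a \<Rightarrow> bool) \<Rightarrow> nat \<Rightarrow> ('a \<Rightarrow> nat) \<Rightarrow> bool" where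
  "packing_coloring V E k c \<longleftrightarrow> (\<forall>v\<in>V. c v \<in> {1..k}) \<and>
     (\<forall>i\<in>{1..k}. i_packing V E i {v\<in>V. c v = i})"

definition packing_chromatic :: "'a set \<Rightarrow> ('a \<Rightarrow> 'a \<Rightarrow> bool) \<Rightarrow> nat" where
  "packing_chromatic V E = (LEAST k. \<exists>c. packing_coloring V E k c)"

definition clique_number :: "'a set \<Rightarrow> ('a \<Rightarrow> 'a \<Rightarrow> bool) \<Rightarrow> nat" where
  "clique_number V E = Max {card K | K. K \<subseteq> V \<and> (\<forall>u\<in>K. \<forall>v\<in>K. u \<noteq> v \<longrightarrow> E u v)}"

text \<open>Finite super subdivision: original vertices Inl v; for each edge {u,v} and
  each index i < m a new vertex Inr ({u,v}, i) adjacent exactly to u and v.\<close>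
definition fssd_V :: "'a set \<Rightarrow> ('a \<Rightarrow> 'a \<Rightarrow> bool) \<Rightarrow> nat \<Rightarrow> ('a + 'a set \<times> nat) set" where
  "fssd_V V E m = Inl ` V \<union> {Inr ({u, v}, i) | u v i. E u v \<and> i < m}"

definition fssd_E :: "('a \<Rightarrow> 'a \<Rightarrow> bool) \<Rightarrow> nat \<Rightarrow> ('a + 'a set \<times> nat) \<Rightarrow> ('a + 'a set \<times> nat) \<Rightarrow> bool" where
  "fssd_E E m x y \<longleftrightarrow> (\<exists>w a b i. E a b \<and> i < m \<and> w \<in> {a, b} \<and>
     ((x = Inl w \<and> y = Inr ({a, b}, i)) \<or> (x = Inr ({a, b}, i) \<and> y = Inl w)))"

end

(* Upper bound: shift an optimal packing coloring of G up by one on the original vertices and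
   give every subdivision vertex color 1.  Deleting the subdivision vertices from a walk between
   original vertices of FSSD_m(G) leaves a walk of G of at most half the length, so the class of
   color i + 1 stays an (i + 1)-packing.

   Lower bound: let K be a maximum clique, w = |K|, and write s(x,y) for the subdivision vertex
   of index 0 of the edge xy.  The vertices of K are pairwise at distance 2 in FSSD_m(G), so are
   the w - 1 vertices of the star {s(x,y) | y in K - {x}}, and any two vertices s(x,y) with
   x, y in K are at distance at most 4.  Suppose only k <= w colors are used.  A case analysis on
   the colors of K always yields w vertices that need pairwise distinct colors >= 2, or w - 1
   vertices that need pairwise distinct colors >= 3, except when K is entirely colored 1: then
   every star uses exactly the colors 2..k, so color 4 occurs in two different stars, which are
   too close to each other.  For w <= 2, a path on three vertices already forces three colors. *)

theory Submission
  imports Defs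
begin

lemma simple_graph_edgeD:
  assumes "simple_graph V E" "E u v"
  shows "u \<in> V" "v \<in> V" "u \<noteq> v" "E v u"
proof -
  have "\<forall>u v. E u v \<longrightarrow> u \<in> V \<and> v \<in> V \<and> u \<noteq> v \<and> E v u"
    using assms(1) unfolding simple_graph_def by (rule conjunct2)
  then show "u \<in> V" "v \<in> V" "u \<noteq> v" "E v u"
    using assms(2) by blast+
qed

lemma simple_graph_finite: "simple_graph V E \<Longrightarrow> finite V"
  unfolding simple_graph_def by (rule conjunct1)

lemma walk_Cons:
  "walk V E (x # xs) \<longleftrightarrow> x \<in> V \<and> (xs = [] \<or> E x (hd xs) \<and> walk V E xs)"
  by (cases xs) (auto simp: walk_def nth_Cons split: nat.splits)

lemma walk_append:
  assumes "walk V E xs" "walk V E ys" "last xs = hd ys"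
  shows "walk V E (xs @ tl ys)"
  using assms
proof (induction xs)
  case (Cons x xs)
  show ?case
  proof (cases "xs = []")
    case True
    with Cons.prems have "x # tl ys = ys"
      by (cases ys) (auto simp: walk_def)
    with Cons.prems True show ?thesis by simp
  next
    case False
    with Cons show ?thesis by (simp add: walk_Cons)
  qed
qed (simp add: walk_def)

lemma walk_rev:
  assumes sym: "\<And>x y. E x y \<Longrightarrow> E y x" and "walk V E xs"
  shows "walk V E (rev xs)"
  using assms(2)
proof (induction xs)
  case (Cons x xs)
  show ?case
  proof (cases "xs = []")
    case True
    with Cons.prems show ?thesis by simp
  next
    case False
    then obtain y ys where "xs = y # ys" by (cases xs) auto
    with Cons have "walk V E (rev xs)" "walk V E [hd xs, x]"
      using sym[of x y] by (auto simp: walk_Cons)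
    moreover have "last (rev xs) = hd [hd xs, x]"
      using False by (simp add: last_rev)
    ultimately show ?thesis
      using walk_append by fastforce
  qed
qed (simp add: walk_def)

lemma gdist_le_enat_iff:
  "gdist V E x y \<le> enat n \<longleftrightarrow>
     (\<exists>xs. walk V E xs \<and> hd xs = x \<and> last xs = y \<and> length xs \<le> Suc n)"
proof
  let ?walks = "{xs. walk V E xs \<and> hd xs = x \<and> last xs = y}"
  let ?len = "\<lambda>xs. enat (length xs - 1)"
  assume le: "gdist V E x y \<le> enat n"
  have "?walks \<noteq> {}"
  proof
    assume "?walks = {}"
    then have "gdist V E x y = \<infinity>"
      unfolding gdist_def by (simp only: image_empty Inf_empty top_enat_def)
    with le show False by simp
  qed
  then obtain xs where "xs \<in> ?walks" "gdist V E x y = ?len xs"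
    unfolding gdist_def using wellorder_InfI[of _ "?len ` ?walks"] by blast
  with le show "\<exists>xs. walk V E xs \<and> hd xs = x \<and> last xs = y \<and> length xs \<le> Suc n"
    by (auto simp: walk_def)
next
  assume "\<exists>xs. walk V E xs \<and> hd xs = x \<and> last xs = y \<and> length xs \<le> Suc n"
  then show "gdist V E x y \<le> enat n"
    unfolding gdist_def by (force intro: INF_lower2)
qed

lemma gdist_edge:
  assumes "x \<in> V" "y \<in> V" "E x y"
  shows "gdist V E x y \<le> 1"
  using assms gdist_le_enat_iff[of V E x y 1]
  by (auto simp: one_enat_def walk_Cons intro!: exI[of _ "[x, y]"])

lemma gdist_triangle: "gdist V E x z \<le> gdist V E x y + gdist V E y z"
proof (cases "gdist V E x y = \<infinity> \<or> gdist V E y z = \<infinity>")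
  case True
  then show ?thesis by auto
next
  case False
  then obtain a b where a: "gdist V E x y = enat a" and b: "gdist V E y z = enat b"
    by auto
  obtain xs where xs: "walk V E xs" "hd xs = x" "last xs = y" "length xs \<le> Suc a"
    using a gdist_le_enat_iff[of V E x y a] by auto
  obtain ys where ys: "walk V E ys" "hd ys = y" "last ys = z" "length ys \<le> Suc b"
    using b gdist_le_enat_iff[of V E y z b] by auto
  have "walk V E (xs @ tl ys)"
    using walk_append[OF xs(1) ys(1)] xs(3) ys(2) by simp
  moreover have "xs \<noteq> []" "ys \<noteq> []"
    using xs(1) ys(1) by (simp_all add: walk_def)
  then have "hd (xs @ tl ys) = x" "last (xs @ tl ys) = z"
    using xs(2,3) ys(2,3) by (auto simp: last_append neq_Nil_conv)
  moreover have "length (xs @ tl ys) \<le> Suc (a + b)"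
    using xs(4) ys(4) by simp
  ultimately have "gdist V E x z \<le> enat (a + b)"
    unfolding gdist_le_enat_iff by blast
  then show ?thesis
    using a b by simp
qed

lemma gdist_sym:
  assumes "\<And>x y. E x y \<Longrightarrow> E y x"
  shows "gdist V E x y = gdist V E y x"
proof -
  have le: "gdist V E x y \<le> gdist V E y x" for x y
    unfolding gdist_def
  proof (rule INF_mono)
    fix xs assume "xs \<in> {xs. walk V E xs \<and> hd xs = y \<and> last xs = x}"
    then show "\<exists>ys\<in>{xs. walk V E xs \<and> hd xs = x \<and> last xs = y}.
        enat (length ys - 1) \<le> enat (length xs - 1)"
      by (intro bexI[of _ "rev xs"]) (auto simp: walk_rev[OF assms] hd_rev last_rev)
  qed
  show ?thesis
    using le[of x y] le[of y x] by (rule antisym)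
qed

lemma gdist_le_1_imp_edge:
  assumes "gdist V E x y \<le> 1" "x \<noteq> y"
  shows "E x y"
proof -
  obtain xs where xs: "walk V E xs" "hd xs = x" "last xs = y" "length xs \<le> 2"
    using assms(1) gdist_le_enat_iff[of V E x y 1] by (auto simp: one_enat_def)
  then consider z where "xs = [z]" | z z' where "xs = [z, z']"
    by (auto simp: walk_def length_Suc_conv le_Suc_eq numeral_2_eq_2)
  then show ?thesis
    using xs assms(2) by cases (auto simp: walk_Cons)
qed

lemma walk_crossing_edge:
  assumes "walk V E xs" "hd xs \<in> S" "last xs \<notin> S"
  shows "\<exists>u\<in>S. \<exists>v. v \<notin> S \<and> E u v"
  using assms
proof (induction xs)
  case (Cons x xs)
  show ?case
  proof (cases "xs = []")
    case True
    with Cons.prems show ?thesis by simp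
  next
    case False
    with Cons show ?thesis by (cases "hd xs \<in> S") (auto simp: walk_Cons)
  qed
qed (simp add: walk_def)

lemma connected_graph_crossing_edge:
  assumes "connected_graph V E" "u \<in> S" "S \<subseteq> V" "v \<in> V - S"
  shows "\<exists>x\<in>S. \<exists>y. y \<notin> S \<and> E x y"
proof -
  obtain n where "gdist V E u v = enat n"
    using assms unfolding connected_graph_def by blast
  then obtain xs where "walk V E xs" "hd xs = u" "last xs = v"
    using gdist_le_enat_iff[of V E u v n] by auto
  then show ?thesis
    using walk_crossing_edge assms(2,4) by fastforce
qed

lemma card_ge_3_obtain_distinct:
  assumes "card V \<ge> 3"
  obtains z where "z \<in> V" "z \<noteq> x" "z \<noteq> y"
proof -
  have "\<not> V \<subseteq> {x, y}"
  proof
    assume "V \<subseteq> {x, y}"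
    then have "card V \<le> card {x, y}" by (simp add: card_mono)
    also have "\<dots> \<le> 2" by (simp add: card_insert_le_m1)
    finally show False using assms by simp
  qed
  then show ?thesis using that by blast
qed

lemma connected_graph_path2:
  assumes "simple_graph V E" "connected_graph V E" "card V \<ge> 3"
  obtains a b d where "E a b" "E b d" "a \<noteq> d"
proof -
  have "V \<noteq> {}" using assms(3) by auto
  then obtain u where u: "u \<in> V" by blast
  then obtain v where "v \<in> V" "v \<noteq> u"
    using card_ge_3_obtain_distinct[OF assms(3)] by metis
  then obtain y where uy: "E u y"
    using connected_graph_crossing_edge[OF assms(2), of u "{u}" v] u by auto
  then have "y \<in> V" "y \<noteq> u" using simple_graph_edgeD(2,3)[OF assms(1) uy] by auto
  obtain z where "z \<in> V" "z \<noteq> u" "z \<noteq> y"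
    using card_ge_3_obtain_distinct[OF assms(3)] by metis
  then obtain x z' where "x \<in> {u, y}" "z' \<notin> {u, y}" "E x z'"
    using connected_graph_crossing_edge[OF assms(2), of u "{u, y}" z] u \<open>y \<in> V\<close> by auto
  then show ?thesis
    using that[of y u z'] that[of u y z'] uy simple_graph_edgeD(4)[OF assms(1) uy] by auto
qed

definition is_clique :: "'a set \<Rightarrow> ('a \<Rightarrow> 'a \<Rightarrow> bool) \<Rightarrow> 'a set \<Rightarrow> bool" where
  "is_clique V E K \<longleftrightarrow> K \<subseteq> V \<and> (\<forall>u\<in>K. \<forall>v\<in>K. u \<noteq> v \<longrightarrow> E u v)"

lemma is_clique_edge: "is_clique V E K \<Longrightarrow> x \<in> K \<Longrightarrow> y \<in> K \<Longrightarrow> x \<noteq> y \<Longrightarrow> E x y"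
  unfolding is_clique_def by blast

lemma clique_number_attained:
  assumes "finite V"
  obtains K where "is_clique V E K" "card K = clique_number V E"
proof -
  let ?sizes = "{card K | K. is_clique V E K}"
  have "?sizes \<subseteq> {..card V}"
    using assms by (auto simp: is_clique_def card_mono)
  then have "finite ?sizes" by (rule finite_subset) simp
  moreover have "?sizes \<noteq> {}"
    by (auto simp: is_clique_def)
  ultimately have "Max ?sizes \<in> ?sizes" by (rule Max_in)
  then show ?thesis
    using that by (auto simp: clique_number_def is_clique_def)
qed

lemma packing_coloring_color:
  "packing_coloring V E k c \<Longrightarrow> v \<in> V \<Longrightarrow> 1 \<le> c v \<and> c v \<le> k"
  unfolding packing_coloring_def by auto

lemma packing_coloring_far:
  assumes "packing_coloring V E k c" "x \<in> V" "y \<in> V" "x \<noteq> y" "c x = c y"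
  shows "enat (c x) < gdist V E x y"
  using assms unfolding packing_coloring_def i_packing_def by auto

lemma packing_coloringI:
  assumes "\<And>v. v \<in> V \<Longrightarrow> c v \<in> {1..k}"
    and "\<And>x y. x \<in> V \<Longrightarrow> y \<in> V \<Longrightarrow> x \<noteq> y \<Longrightarrow> c x = c y \<Longrightarrow> enat (c x) < gdist V E x y"
  shows "packing_coloring V E k c"
  unfolding packing_coloring_def i_packing_def using assms(1) by (auto intro!: assms(2))

lemma packing_coloring_inj_on:
  assumes "packing_coloring V E k c" "S \<subseteq> V"
    and "\<And>x y. x \<in> S \<Longrightarrow> y \<in> S \<Longrightarrow> x \<noteq> y \<Longrightarrow> gdist V E x y \<le> enat (max (c x) (c y))"
  shows "inj_on c S"
proof (rule inj_onI, rule ccontr)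
  fix x y assume xy: "x \<in> S" "y \<in> S" "c x = c y" "x \<noteq> y"
  then have "gdist V E x y \<le> enat (c x)"
    using assms(3) by force
  moreover have "enat (c x) < gdist V E x y"
    using packing_coloring_far[OF assms(1)] assms(2) xy by blast
  ultimately show False by simp
qed

lemma packing_coloring_card_le:
  assumes "packing_coloring V E k c" "S \<subseteq> V"
    and "\<And>x y. x \<in> S \<Longrightarrow> y \<in> S \<Longrightarrow> x \<noteq> y \<Longrightarrow> gdist V E x y \<le> enat (max (c x) (c y))"
    and "\<And>x. x \<in> S \<Longrightarrow> t \<le> c x" "S \<noteq> {}"
  shows "card S + t \<le> k + 1"
proof -
  have "t \<le> k"
    using assms(2,4,5) packing_coloring_color[OF assms(1)] by force
  have "c ` S \<subseteq> {t..k}"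
    using assms(2,4) packing_coloring_color[OF assms(1)] by force
  then have "card S \<le> card {t..k}"
    by (intro card_inj_on_le[OF packing_coloring_inj_on[OF assms(1-3)]]) simp_all
  with \<open>t \<le> k\<close> show ?thesis by simp
qed

lemma packing_coloring_exists:
  assumes "finite V"
  obtains k c where "packing_coloring V E k c"
proof -
  obtain f :: "'a \<Rightarrow> nat" and n where f: "bij_betw f V {..<n}"
    using assms by (metis finite_imp_inj_to_nat_seg bij_betw_def lessThan_def)
  have "f v < n" if "v \<in> V" for v
    using bij_betwE[OF f] that by blast
  then have "packing_coloring V E n (\<lambda>v. f v + 1)"
    using bij_betw_imp_inj_on[OF f] by (intro packing_coloringI) (auto simp: Suc_le_eq dest: inj_onD)
  then show ?thesis by (rule that)
qed

lemma packing_chromatic_le: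
  "packing_coloring V E k c \<Longrightarrow> packing_chromatic V E \<le> k"
  unfolding packing_chromatic_def by (rule Least_le) blast

lemma packing_chromatic_attained:
  assumes "packing_coloring V E k c"
  obtains c' where "packing_coloring V E (packing_chromatic V E) c'"
proof -
  have "\<exists>c'. packing_coloring V E (LEAST k. \<exists>c. packing_coloring V E k c) c'"
    by (rule LeastI[of _ k]) (use assms in blast)
  then show ?thesis
    using that unfolding packing_chromatic_def by blast
qed

definition subdiv_vertex :: "'a \<Rightarrow> 'a \<Rightarrow> 'a + 'a set \<times> nat" where
  "subdiv_vertex u v = Inr ({u, v}, 0)"

lemma subdiv_vertex_eq_iff: "subdiv_vertex u v = subdiv_vertex u' v' \<longleftrightarrow> {u, v} = {u', v'}"
  by (simp add: subdiv_vertex_def)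

lemma Inl_neq_subdiv_vertex [simp]: "Inl w \<noteq> subdiv_vertex u v"
  by (simp add: subdiv_vertex_def)

lemma Inl_in_fssd_V_iff [simp]: "Inl v \<in> fssd_V V E m \<longleftrightarrow> v \<in> V"
  by (auto simp: fssd_V_def)

lemma subdiv_vertex_in_fssd_V: "E u v \<Longrightarrow> 1 \<le> m \<Longrightarrow> subdiv_vertex u v \<in> fssd_V V E m"
  by (auto simp: fssd_V_def subdiv_vertex_def)

lemma fssd_E_commute: "fssd_E E m x y \<longleftrightarrow> fssd_E E m y x"
  unfolding fssd_E_def by blast

lemma fssd_E_Inl_subdiv_vertex:
    "E u v \<Longrightarrow> w \<in> {u, v} \<Longrightarrow> 1 \<le> m \<Longrightarrow> fssd_E E m (Inl w) (subdiv_vertex u v)"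
  and fssd_E_subdiv_vertex_Inl:
    "E u v \<Longrightarrow> w \<in> {u, v} \<Longrightarrow> 1 \<le> m \<Longrightarrow> fssd_E E m (subdiv_vertex u v) (Inl w)"
  unfolding fssd_E_def subdiv_vertex_def
  by (intro exI[of _ w] exI[of _ u] exI[of _ v] exI[of _ 0]; simp)+

lemma not_fssd_E_Inr_Inr [simp]: "\<not> fssd_E E m (Inr p) (Inr q)"
  by (simp add: fssd_E_def)

lemma fssd_walk_project:
  assumes "simple_graph V E"
  shows "walk (fssd_V V E m) (fssd_E E m) xs \<Longrightarrow> hd xs = Inl u \<Longrightarrow> last xs = Inl v \<Longrightarrow>
    \<exists>ys. walk V E ys \<and> hd ys = u \<and> last ys = v \<and> 2 * length ys \<le> length xs + 1"
proof (induction "length xs" arbitrary: xs u rule: less_induct)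
  case less
  then obtain xs' where xs: "xs = Inl u # xs'"
    by (cases xs) (auto simp: walk_def)
  show ?case
  proof (cases xs')
    case Nil
    with less.prems xs show ?thesis
      by (intro exI[of _ "[u]"]) (auto simp: walk_Cons)
  next
    case (Cons y xs'')
    have u: "u \<in> V" and uy: "fssd_E E m (Inl u) y" and tail: "walk (fssd_V V E m) (fssd_E E m) xs'"
      using less.prems(1) xs Cons by (auto simp: walk_Cons)
    then obtain a b i where ab: "E a b" "u \<in> {a, b}" "y = Inr ({a, b}, i)"
      unfolding fssd_E_def by auto
    with less.prems(3) xs Cons obtain z zs where zs: "xs'' = z # zs"
      by (cases xs'') auto
    have "fssd_E E m y z"
      using tail Cons zs by (simp add: walk_Cons)
    with ab obtain w where z: "z = Inl w" "w \<in> {a, b}"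
      unfolding fssd_E_def by (auto simp: doubleton_eq_iff)
    obtain ys where ys: "walk V E ys" "hd ys = w" "last ys = v" "2 * length ys \<le> length xs'' + 1"
      using less.hyps[of xs'' w] tail less.prems(3) xs Cons zs z by (auto simp: walk_Cons)
    show ?thesis
    proof (cases "u = w")
      case True
      with ys show ?thesis
        using xs Cons by (intro exI[of _ ys]) auto
    next
      case False
      with ab z have "E u w"
        using simple_graph_edgeD(4)[OF assms ab(1)] by auto
      moreover have "ys \<noteq> []"
        using ys(1) by (simp add: walk_def)
      ultimately show ?thesis
        using xs Cons u ys by (intro exI[of _ "u # ys"]) (auto simp: walk_Cons)
    qed
  qed
qed

lemma gdist_le_half_fssd_gdist:
  assumes "simple_graph V E" "gdist (fssd_V V E m) (fssd_E E m) (Inl u) (Inl v) \<le> enat n"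
  shows "gdist V E u v \<le> enat (n div 2)"
proof -
  obtain xs where xs: "walk (fssd_V V E m) (fssd_E E m) xs" "hd xs = Inl u" "last xs = Inl v"
    "length xs \<le> Suc n"
    using assms(2) unfolding gdist_le_enat_iff by blast
  then obtain ys where ys: "walk V E ys" "hd ys = u" "last ys = v" "2 * length ys \<le> length xs + 1"
    using fssd_walk_project[OF assms(1) xs(1-3)] by blast
  with xs(4) have "length ys \<le> Suc (n div 2)"
    by linarith
  with ys show ?thesis
    unfolding gdist_le_enat_iff by blast
qed

lemma fssd_gdist_Inl_Inl_gt:
  assumes "simple_graph V E" "1 \<le> i" "enat i < gdist V E u v"
  shows "enat (i + 1) < gdist (fssd_V V E m) (fssd_E E m) (Inl u) (Inl v)"
proof (rule ccontr)
  assume "\<not> ?thesis"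
  then have "gdist V E u v \<le> enat ((i + 1) div 2)"
    by (intro gdist_le_half_fssd_gdist[OF assms(1)]) (simp add: not_less)
  also have "\<dots> \<le> enat i"
    using assms(2) by simp
  finally show False
    using assms(3) by simp
qed

lemma fssd_gdist_Inr_Inr:
  assumes "Inr p \<noteq> Inr q"
  shows "enat 1 < gdist (fssd_V V E m) (fssd_E E m) (Inr p) (Inr q)"
proof (rule ccontr)
  assume "\<not> ?thesis"
  then have "fssd_E E m (Inr p) (Inr q)"
    using assms gdist_le_1_imp_edge[of "fssd_V V E m" "fssd_E E m" "Inr p" "Inr q"]
    by (simp add: one_enat_def not_less)
  then show False by simp
qed

lemma packing_coloring_fssd_lift:
  assumes "simple_graph V E" "packing_coloring V E k c"
  shows "packing_coloring (fssd_V V E m) (fssd_E E m) (k + 1) (case_sum (\<lambda>v. c v + 1) (\<lambda>_. 1))"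
    (is "packing_coloring ?W ?R _ ?c")
proof (rule packing_coloringI)
  fix x assume "x \<in> ?W"
  then show "?c x \<in> {1..k + 1}"
    using packing_coloring_color[OF assms(2)] by (cases x) auto
next
  fix x y assume xy: "x \<in> ?W" "y \<in> ?W" "x \<noteq> y" "?c x = ?c y"
  have c_pos: "1 \<le> c v" if "v \<in> V" for v
    using packing_coloring_color[OF assms(2) that] by simp
  consider u v where "x = Inl u" "y = Inl v" | p q where "x = Inr p" "y = Inr q"
    using xy by (cases x; cases y) (auto dest: c_pos)
  then show "enat (?c x) < gdist ?W ?R x y"
  proof cases
    case 1
    with xy show ?thesis
      using fssd_gdist_Inl_Inl_gt[OF assms(1) c_pos] packing_coloring_far[OF assms(2)] by auto
  next
    case 2
    with xy show ?thesis
      using fssd_gdist_Inr_Inr by simp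
  qed
qed

locale fssd_coloring =
  fixes V :: "'a set" and E :: "'a \<Rightarrow> 'a \<Rightarrow> bool" and m k :: nat
    and c :: "'a + 'a set \<times> nat \<Rightarrow> nat"
  assumes simple: "simple_graph V E"
    and m_pos: "1 \<le> m"
    and coloring: "packing_coloring (fssd_V V E m) (fssd_E E m) k c"
begin

abbreviation W where "W \<equiv> fssd_V V E m"
abbreviation R where "R \<equiv> fssd_E E m"

lemmas edgeD = simple_graph_edgeD[OF simple]

lemma finite_V: "finite V"
  using simple by (rule simple_graph_finite)

lemma subdiv_vertex_in_W: "E u v \<Longrightarrow> subdiv_vertex u v \<in> W"
  using m_pos by (simp add: subdiv_vertex_in_fssd_V)

lemma Inl_in_W: "E u v \<Longrightarrow> w \<in> {u, v} \<Longrightarrow> Inl w \<in> W"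
  using edgeD(1,2) by auto

lemma gdist_commute: "gdist W R x y = gdist W R y x"
  using fssd_E_commute by (blast intro: gdist_sym)

lemma gdist_Inl_subdiv:
  assumes "E u v" "w \<in> {u, v}"
  shows "gdist W R (Inl w) (subdiv_vertex u v) \<le> enat 1"
  using gdist_edge[where E = R, OF Inl_in_W[of u v w, OF assms] subdiv_vertex_in_W[OF assms(1)]
      fssd_E_Inl_subdiv_vertex[of E u v w, OF assms m_pos]]
  by (simp add: one_enat_def)

lemma gdist_via:
  assumes "gdist W R x y \<le> enat a" "gdist W R y z \<le> enat b"
  shows "gdist W R x z \<le> enat (a + b)"
  using order_trans[OF gdist_triangle[of W R x z y] add_mono[OF assms]] by simp

lemma gdist_subdiv_subdiv:
  assumes "E u v" "E u' v'" "w \<in> {u, v}" "w \<in> {u', v'}"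
  shows "gdist W R (subdiv_vertex u v) (subdiv_vertex u' v') \<le> enat 2"
  using gdist_via[OF _ gdist_Inl_subdiv[OF assms(2,4)], of "subdiv_vertex u v" 1]
    gdist_Inl_subdiv[OF assms(1,3)] by (simp add: gdist_commute eval_nat_numeral)

lemma gdist_Inl_Inl: "E u v \<Longrightarrow> gdist W R (Inl u) (Inl v) \<le> enat 2"
  using gdist_via[OF gdist_Inl_subdiv[of u v u], of "Inl v" 1] gdist_Inl_subdiv[of u v v]
  by (simp add: gdist_commute eval_nat_numeral)

lemma gdist_Inl_subdiv_3:
  "E a b \<Longrightarrow> E a y \<Longrightarrow> gdist W R (Inl b) (subdiv_vertex a y) \<le> enat 3"
  using gdist_via[OF gdist_Inl_subdiv[of a b b] gdist_subdiv_subdiv[of a b a y a]]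
  by (simp add: eval_nat_numeral)

lemma gdist_subdiv_subdiv_4:
  "E a y \<Longrightarrow> E a z \<Longrightarrow> E z v \<Longrightarrow> gdist W R (subdiv_vertex a y) (subdiv_vertex z v) \<le> enat 4"
  using gdist_via[OF gdist_subdiv_subdiv[of a y a z a] gdist_subdiv_subdiv[of a z z v z]]
  by (simp add: eval_nat_numeral)

lemma color_range: "x \<in> W \<Longrightarrow> 1 \<le> c x \<and> c x \<le> k"
  using packing_coloring_color[OF coloring] .

lemma color_neq_if_close:
  assumes "x \<in> W" "y \<in> W" "x \<noteq> y" "gdist W R x y \<le> enat d" "d \<le> c x"
  shows "c x \<noteq> c y"
proof
  assume "c x = c y"
  with packing_coloring_far[OF coloring assms(1-3)] have "enat (c x) < gdist W R x y" .
  moreover have "gdist W R x y \<le> enat (c x)"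
    using assms(4,5) by (meson enat_ord_simps(1) order_trans)
  ultimately show False by simp
qed

lemma color_subdiv_neq_Inl:
  assumes "E u v" "w \<in> {u, v}"
  shows "c (subdiv_vertex u v) \<noteq> c (Inl w)"
proof -
  have "Inl w \<in> W"
    using assms by (rule Inl_in_W)
  then have "c (Inl w) \<noteq> c (subdiv_vertex u v)"
    using color_neq_if_close[OF _ subdiv_vertex_in_W[OF assms(1)] _ gdist_Inl_subdiv[OF assms]]
      color_range by simp
  then show ?thesis by simp
qed

lemma inj_on_color_if_close:
  assumes "S \<subseteq> W" "\<And>x. x \<in> S \<Longrightarrow> d \<le> c x"
    and "\<And>x y. x \<in> S \<Longrightarrow> y \<in> S \<Longrightarrow> x \<noteq> y \<Longrightarrow> gdist W R x y \<le> enat d"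
  shows "inj_on c S"
  using packing_coloring_inj_on[OF coloring assms(1)] assms(2,3)
  by (meson enat_ord_simps(1) max.coboundedI1 order_trans)

lemma card_le_if_close:
  assumes "S \<subseteq> W" "S \<noteq> {}" "\<And>x. x \<in> S \<Longrightarrow> t \<le> c x" "d \<le> t"
    and "\<And>x y. x \<in> S \<Longrightarrow> y \<in> S \<Longrightarrow> x \<noteq> y \<Longrightarrow> gdist W R x y \<le> enat d"
  shows "card S + t \<le> k + 1"
  using packing_coloring_card_le[OF coloring assms(1) _ assms(3,2)] assms(3-5)
  by (meson enat_ord_simps(1) max.coboundedI1 order_trans)

lemma three_le_colors:
  assumes "E a b" "E b d" "a \<noteq> d"
  shows "3 \<le> k"
proof (rule ccontr)
  assume "\<not> 3 \<le> k"
  then have range: "1 \<le> c x \<and> c x \<le> 2" if "x \<in> W" for x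
    using color_range[OF that] by simp
  have in_W: "Inl a \<in> W" "Inl b \<in> W" "subdiv_vertex a b \<in> W" "subdiv_vertex b d \<in> W"
    using assms Inl_in_W subdiv_vertex_in_W by auto
  have "c (subdiv_vertex a b) \<noteq> c (Inl a)" "c (subdiv_vertex a b) \<noteq> c (Inl b)"
    "c (subdiv_vertex b d) \<noteq> c (Inl b)"
    using color_subdiv_neq_Inl assms by auto
  moreover have "c (Inl b) = 2 \<Longrightarrow> c (Inl b) \<noteq> c (Inl a)"
    using color_neq_if_close[OF in_W(2,1) _ gdist_Inl_Inl[OF edgeD(4)[OF assms(1)]]]
      edgeD(3)[OF assms(1)] by auto
  moreover have "subdiv_vertex a b \<noteq> subdiv_vertex b d"
    using assms edgeD(3) by (auto simp: subdiv_vertex_eq_iff doubleton_eq_iff)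
  then have "c (subdiv_vertex a b) = 2 \<Longrightarrow> c (subdiv_vertex a b) \<noteq> c (subdiv_vertex b d)"
    using color_neq_if_close[OF in_W(3,4) _ gdist_subdiv_subdiv[OF assms(1,2), of b]] by auto
  ultimately show False
    using range[OF in_W(1)] range[OF in_W(2)] range[OF in_W(3)] range[OF in_W(4)]
    by presburger
qed

lemma finite_clique: "is_clique V E K \<Longrightarrow> finite K"
  using finite_V by (auto simp: is_clique_def intro: finite_subset)

lemma card_star:
  assumes "is_clique V E K" "x \<in> K"
  shows "card (subdiv_vertex x ` (K - {x})) = card K - 1"
proof -
  have "finite K"
    using assms(1) by (rule finite_clique)
  moreover have "inj_on (subdiv_vertex x) (K - {x})"
    by (auto simp: inj_on_def subdiv_vertex_eq_iff doubleton_eq_iff)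
  ultimately show ?thesis
    using assms(2) by (simp add: card_image)
qed

lemma star_subset_W:
  assumes "is_clique V E K" "x \<in> K"
  shows "subdiv_vertex x ` (K - {x}) \<subseteq> W"
  by (auto intro!: subdiv_vertex_in_W is_clique_edge[OF assms])

lemma gdist_star:
  assumes "is_clique V E K" "x \<in> K" "p \<in> subdiv_vertex x ` (K - {x})" "q \<in> subdiv_vertex x ` (K - {x})"
  shows "gdist W R p q \<le> enat 2"
  using assms gdist_subdiv_subdiv[of x _ x _ x] is_clique_edge[OF assms(1)] by auto

lemma color_subdiv_ge_2: "E x y \<Longrightarrow> c (Inl x) = 1 \<Longrightarrow> 2 \<le> c (subdiv_vertex x y)"
  using color_subdiv_neq_Inl[of x y x] color_range[OF subdiv_vertex_in_W] by fastforce

lemma color_star_ge_2: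
  assumes "is_clique V E K" "x \<in> K" "p \<in> subdiv_vertex x ` (K - {x})" "c (Inl x) = 1"
  shows "2 \<le> c p"
  using assms color_subdiv_ge_2 is_clique_edge[OF assms(1,2)] by blast

lemma card_clique_bound_no_Inl_color_1:
  assumes "is_clique V E K" "K \<noteq> {}" "\<And>a. a \<in> K \<Longrightarrow> c (Inl a) \<noteq> 1"
  shows "card K + 1 \<le> k"
proof -
  have "card (Inl ` K :: ('a + 'a set \<times> nat) set) + 2 \<le> k + 1"
  proof (rule card_le_if_close[where d = 2])
    show "Inl ` K \<subseteq> W"
      using assms(1) by (auto simp: is_clique_def)
    show "2 \<le> c x" if "x \<in> Inl ` K" for x
      using that assms(3) color_range \<open>Inl ` K \<subseteq> W\<close> by fastforce
    show "gdist W R x y \<le> enat 2" if "x \<in> Inl ` K" "y \<in> Inl ` K" "x \<noteq> y" for x y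
      using that gdist_Inl_Inl is_clique_edge[OF assms(1)] by auto
  qed (use assms(2) in auto)
  then show ?thesis
    by (simp add: card_image)
qed

lemma gdist_Inl_star:
  assumes "is_clique V E K" "a \<in> K" "b \<in> K" "b \<noteq> a" "p \<in> subdiv_vertex a ` (K - {a})"
  shows "gdist W R (Inl b) p \<le> enat 3"
proof -
  obtain y where "y \<in> K" "y \<noteq> a" "p = subdiv_vertex a y"
    using assms(5) by blast
  then show ?thesis
    using gdist_Inl_subdiv_3 is_clique_edge[OF assms(1)] assms(2-4) by metis
qed

lemma card_clique_bound_Inl_color_3:
  assumes "is_clique V E K" "a \<in> K" "c (Inl a) = 1" "b \<in> K" "3 \<le> c (Inl b)"
  shows "card K + 1 \<le> k"
proof -
  let ?star = "subdiv_vertex a ` (K - {a})"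
  let ?S = "insert (Inl b) ?star"
  have "b \<noteq> a" using assms(3,5) by auto
  have far: "gdist W R (Inl b) r \<le> enat 3 \<and> gdist W R r (Inl b) \<le> enat 3" if "r \<in> ?star" for r
    using gdist_Inl_star[OF assms(1,2,4) \<open>b \<noteq> a\<close> that] gdist_commute[of r "Inl b"] by simp
  have "card ?S + 2 \<le> k + 1"
  proof (rule packing_coloring_card_le[OF coloring])
    show "?S \<subseteq> W"
      using star_subset_W[OF assms(1,2)] assms(1,4) by (auto simp: is_clique_def)
    show "2 \<le> c p" if "p \<in> ?S" for p
      using that color_star_ge_2[OF assms(1,2) _ assms(3)] assms(5) by auto
    show "gdist W R p q \<le> enat (max (c p) (c q))" if "p \<in> ?S" "q \<in> ?S" "p \<noteq> q" for p q
    proof (cases "Inl b \<in> {p, q}")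
      case True
      then have "gdist W R p q \<le> enat 3"
        using that far by auto
      moreover have "3 \<le> max (c p) (c q)"
        using True assms(5) by auto
      ultimately show ?thesis
        by (meson enat_ord_simps(1) order_trans)
    next
      case False
      then have "gdist W R p q \<le> enat 2" "2 \<le> c p"
        using that gdist_star[OF assms(1,2)] color_star_ge_2[OF assms(1,2) _ assms(3)] by auto
      then show ?thesis
        by (meson enat_ord_simps(1) max.coboundedI1 order_trans)
    qed
  qed simp
  moreover have "Inl b \<notin> ?star" by auto
  ultimately show ?thesis
    using card_star[OF assms(1,2)] assms(2) finite_clique[OF assms(1)]
    by (simp add: card_gt_0_iff)
qed

lemma card_clique_bound_Inl_color_2:
  assumes "is_clique V E K" "2 \<le> card K" "b \<in> K" "c (Inl b) = 2"
    and "\<And>y. y \<in> K \<Longrightarrow> y \<noteq> b \<Longrightarrow> c (Inl y) = 1"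
  shows "card K + 1 \<le> k"
proof -
  let ?S = "subdiv_vertex b ` (K - {b})"
  have "card ?S + 3 \<le> k + 1"
  proof (rule card_le_if_close[where d = 2])
    show "?S \<subseteq> W"
      using assms(1,3) by (rule star_subset_W)
    show "?S \<noteq> {}"
    proof
      assume "?S = {}"
      with card_star[OF assms(1,3)] assms(2) show False by simp
    qed
    show "3 \<le> c p" if "p \<in> ?S" for p
    proof -
      obtain y where y: "y \<in> K" "y \<noteq> b" "p = subdiv_vertex b y"
        using \<open>p \<in> ?S\<close> by blast
      then have "E b y"
        using is_clique_edge[OF assms(1,3)] by blast
      then have "c p \<noteq> c (Inl b)" "c p \<noteq> c (Inl y)" "1 \<le> c p"
        using color_subdiv_neq_Inl[of b y] color_range subdiv_vertex_in_W y(3) by auto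
      then show ?thesis
        using assms(4,5) y(1,2) by simp
    qed
    show "gdist W R p q \<le> enat 2" if "p \<in> ?S" "q \<in> ?S" for p q
      using gdist_star[OF assms(1,3) that] .
  qed simp
  then show ?thesis
    using card_star[OF assms(1,3)] assms(2) by simp
qed

lemma four_le_colors:
  assumes "is_clique V E K" "3 \<le> card K" "\<And>a. a \<in> K \<Longrightarrow> c (Inl a) = 1"
  shows "4 \<le> k"
proof -
  obtain a where a: "a \<in> K"
    using assms(2) by fastforce
  obtain b where b: "b \<in> K" "b \<noteq> a"
    using card_ge_3_obtain_distinct[OF assms(2)] by metis
  obtain d where d: "d \<in> K" "d \<noteq> a" "d \<noteq> b"
    using card_ge_3_obtain_distinct[OF assms(2)] by metis
  have ab: "E a b" and ad: "E a d" and bd: "E b d"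
    using is_clique_edge[OF assms(1)] a b d by metis+
  let ?T = "{subdiv_vertex a b, subdiv_vertex a d, subdiv_vertex b d}"
  have "card ?T + 2 \<le> k + 1"
  proof (rule card_le_if_close[where d = 2])
    show "?T \<subseteq> W"
      using subdiv_vertex_in_W ab ad bd by simp
    show "2 \<le> c p" if "p \<in> ?T" for p
      using that color_subdiv_ge_2 ab ad bd assms(3) a b by auto
    show "gdist W R p q \<le> enat 2" if "p \<in> ?T" "q \<in> ?T" "p \<noteq> q" for p q
      using that gdist_subdiv_subdiv[OF ab ad, of a] gdist_subdiv_subdiv[OF ad ab, of a]
        gdist_subdiv_subdiv[OF ab bd, of b] gdist_subdiv_subdiv[OF bd ab, of b]
        gdist_subdiv_subdiv[OF ad bd, of d] gdist_subdiv_subdiv[OF bd ad, of d] by auto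
  qed simp_all
  moreover have "card ?T = 3"
    using a b d by (auto simp: subdiv_vertex_eq_iff doubleton_eq_iff)
  ultimately show ?thesis by simp
qed

lemma star_colors_eq:
  assumes "is_clique V E K" "x \<in> K" "c (Inl x) = 1" "k \<le> card K"
  shows "c ` subdiv_vertex x ` (K - {x}) = {2..k}"
proof (rule card_seteq)
  show "c ` subdiv_vertex x ` (K - {x}) \<subseteq> {2..k}"
    using color_star_ge_2[OF assms(1,2) _ assms(3)] color_range star_subset_W[OF assms(1,2)]
    by fastforce
  have "inj_on c (subdiv_vertex x ` (K - {x}))"
    using star_subset_W[OF assms(1,2)] color_star_ge_2[OF assms(1,2) _ assms(3)]
      gdist_star[OF assms(1,2)] by (rule inj_on_color_if_close)
  then show "card {2..k} \<le> card (c ` subdiv_vertex x ` (K - {x}))"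
    using card_star[OF assms(1,2)] assms(4) by (simp add: card_image)
qed simp

lemma card_clique_bound_all_Inl_color_1:
  assumes "is_clique V E K" "3 \<le> card K" "\<And>a. a \<in> K \<Longrightarrow> c (Inl a) = 1"
  shows "card K + 1 \<le> k"
proof (rule ccontr)
  assume "\<not> ?thesis"
  then have stars: "c ` subdiv_vertex x ` (K - {x}) = {2..k}" if "x \<in> K" for x
    using star_colors_eq[OF assms(1) that assms(3)[OF that]] by simp
  have "4 \<le> k"
    using assms by (rule four_le_colors)
  obtain a where a: "a \<in> K"
    using assms(2) by fastforce
  have "4 \<in> c ` subdiv_vertex a ` (K - {a})"
    by (subst stars[OF a]) (use \<open>4 \<le> k\<close> in simp)
  then obtain y where y: "y \<in> K" "y \<noteq> a" "c (subdiv_vertex a y) = 4"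
    by (elim imageE) auto
  obtain z where z: "z \<in> K" "z \<noteq> a" "z \<noteq> y"
    using card_ge_3_obtain_distinct[OF assms(2)] by metis
  have "4 \<in> c ` subdiv_vertex z ` (K - {z})"
    by (subst stars[OF z(1)]) (use \<open>4 \<le> k\<close> in simp)
  then obtain v where v: "v \<in> K" "v \<noteq> z" "c (subdiv_vertex z v) = 4"
    by (elim imageE) auto
  have ay: "E a y" and az: "E a z" and zv: "E z v"
    using is_clique_edge[OF assms(1)] a y z v by metis+
  have "subdiv_vertex a y \<noteq> subdiv_vertex z v"
    using z by (auto simp: subdiv_vertex_eq_iff doubleton_eq_iff)
  then have "c (subdiv_vertex a y) \<noteq> c (subdiv_vertex z v)"
    using color_neq_if_close[OF subdiv_vertex_in_W[OF ay] subdiv_vertex_in_W[OF zv] _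
        gdist_subdiv_subdiv_4[OF ay az zv]] y(3) by simp
  then show False
    using y(3) v(3) by simp
qed

lemma Inl_color_2_unique:
  assumes "is_clique V E K" "b \<in> K" "y \<in> K" "y \<noteq> b" "c (Inl b) = 2"
  shows "c (Inl y) \<noteq> 2"
proof -
  have "E b y"
    using is_clique_edge[OF assms(1,2,3)] assms(4) by simp
  then have "c (Inl b) \<noteq> c (Inl y)"
    using color_neq_if_close[OF Inl_in_W[of b y b] Inl_in_W[of b y y] _ gdist_Inl_Inl] assms(4,5)
    by simp
  with assms(5) show ?thesis by simp
qed

lemma card_clique_bound:
  assumes "is_clique V E K" "3 \<le> card K"
  shows "card K + 1 \<le> k"
proof (cases "\<exists>a\<in>K. c (Inl a) = 1")
  case False
  then show ?thesis
    using card_clique_bound_no_Inl_color_1[OF assms(1)] assms(2) by fastforce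
next
  case True
  then obtain a where a: "a \<in> K" "c (Inl a) = 1" by blast
  show ?thesis
  proof (cases "\<exists>b\<in>K. 3 \<le> c (Inl b)")
    case True
    then show ?thesis
      using card_clique_bound_Inl_color_3[OF assms(1) a] by blast
  next
    case False
    then have le_2: "c (Inl b) \<le> 2" if "b \<in> K" for b
      using that by fastforce
    have ge_1: "1 \<le> c (Inl b)" if "b \<in> K" for b
      using that color_range assms(1) by (auto simp: is_clique_def)
    show ?thesis
    proof (cases "\<exists>b\<in>K. c (Inl b) = 2")
      case True
      then obtain b where b: "b \<in> K" "c (Inl b) = 2" by blast
      have "c (Inl y) = 1" if "y \<in> K" "y \<noteq> b" for y
        using Inl_color_2_unique[OF assms(1) b(1) that b(2)] le_2[OF that(1)] ge_1[OF that(1)]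
        by linarith
      then show ?thesis
        using card_clique_bound_Inl_color_2[OF assms(1) _ b] assms(2) by simp
    next
      case False
      then have "c (Inl b) = 1" if "b \<in> K" for b
        using le_2[OF that] ge_1[OF that] that by fastforce
      then show ?thesis
        using card_clique_bound_all_Inl_color_1[OF assms] by blast
    qed
  qed
qed

end

theorem proposition3:
  fixes V :: "'a set" and E :: "'a \<Rightarrow> 'a \<Rightarrow> bool" and m :: nat
  assumes "simple_graph V E"
    and "connected_graph V E"
    and "card V \<ge> 3"
    and "m \<ge> 1"
  shows "clique_number V E + 1 \<le> packing_chromatic (fssd_V V E m) (fssd_E E m)
       \<and> packing_chromatic (fssd_V V E m) (fssd_E E m) \<le> packing_chromatic V E + 1"
proof -
  let ?k = "packing_chromatic (fssd_V V E m) (fssd_E E m)"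
  have "finite V"
    using assms(1) by (rule simple_graph_finite)
  then obtain k0 c0 where "packing_coloring V E k0 c0"
    by (rule packing_coloring_exists)
  then obtain c where "packing_coloring V E (packing_chromatic V E) c"
    by (rule packing_chromatic_attained)
  then have lift: "packing_coloring (fssd_V V E m) (fssd_E E m) (packing_chromatic V E + 1)
      (case_sum (\<lambda>v. c v + 1) (\<lambda>_. 1))"
    by (rule packing_coloring_fssd_lift[OF assms(1)])
  then have upper: "?k \<le> packing_chromatic V E + 1"
    by (rule packing_chromatic_le)
  obtain c' where "packing_coloring (fssd_V V E m) (fssd_E E m) ?k c'"
    using lift by (rule packing_chromatic_attained)
  then interpret fssd_coloring V E m ?k c'
    by (rule fssd_coloring.intro[OF assms(1,4)])
  obtain K where K: "is_clique V E K" "card K = clique_number V E"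
    using clique_number_attained[OF \<open>finite V\<close>] .
  obtain a b d where "E a b" "E b d" "a \<noteq> d"
    using connected_graph_path2[OF assms(1-3)] .
  then have "3 \<le> ?k"
    by (rule three_le_colors)
  moreover have "card K + 1 \<le> ?k" if "3 \<le> card K"
    using card_clique_bound[OF K(1) that] .
  ultimately have "clique_number V E + 1 \<le> ?k"
    using K(2) by linarith
  with upper show ?thesis by simp
qed

end
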